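(* Let $K_1\subset U(N_1)$ and $K_2\subset U(N_2)$ be compact connected subgroups and let $K=K_1\oplus K_2=\{U_1\oplus U_2\mid U_1\in K_1,U_2\in K_2\}\subset U(N_1+N_2)$, where $U_1\oplus U_2=\begin{bmatrix}U_1&0\\0&U_2\end{bmatrix}$. Let $A=A_1\oplus A_2$ and $C=C_1\oplus C_2$ with $A_i,C_i\in\mathbb{C}^{N_i\times N_i}$, $i=1,2$. Then $$W_K(C,A)=W_{K_1}(C_1,A_1)+W_{K_2}(C_2,A_2)$$ (Minkowski sum). In particular, $W_K(C,A)$ is star-shaped (resp. convex) if $W_{K_1}(C_1,A_1)$ and $W_{K_2}(C_2,A_2)$ are star-shaped (resp. convex).
   Context: For a compact connected subgroup $K\subset U(N)$ and $C,A\in\mathbb{C}^{N\times N}$, the relative $C$-numerical range is $W_K(C,A)=\{\mathrm{tr}(C^\dagger UAU^\dagger)\mid U\in K\}\subset\mathbb{C}$. *)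

theory Defs
  imports "HOL-Analysis.Analysis"
begin

text \<open>Square complex matrices of size N are represented as complex^'n^'n with CARD('n) = N.\<close>

definition mtrace :: "complex^'n^'n \<Rightarrow> complex" where
  "mtrace A = (\<Sum>i\<in>UNIV. A $ i $ i)"

definition adj :: "complex^'n^'n \<Rightarrow> complex^'n^'n" where
  "adj A = (\<chi> i j. cnj (A $ j $ i))"

definition unitary_group :: "(complex^'n^'n) set" where
  "unitary_group = {U. adj U ** U = mat 1 \<and> U ** adj U = mat 1}"

definition compact_connected_subgroup :: "(complex^'n^'n) set \<Rightarrow> bool" where
  "compact_connected_subgroup K \<longleftrightarrow>
     K \<subseteq> unitary_group \<and> mat 1 \<in> K \<and>
     (\<forall>U\<in>K. \<forall>V\<in>K. U ** V \<in> K) \<and> (\<forall>U\<in>K. adj U \<in> K) \<and>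
     compact K \<and> connected K"

definition rel_numrange :: "(complex^'n^'n) set \<Rightarrow> complex^'n^'n \<Rightarrow> complex^'n^'n \<Rightarrow> complex set" where
  "rel_numrange K C A = {mtrace (adj C ** (U ** A ** adj U)) | U. U \<in> K}"

text \<open>Block-diagonal direct sum; the index type 'n + 'm has N1 + N2 elements.\<close>
definition dsum :: "complex^'n^'n \<Rightarrow> complex^'m^'m \<Rightarrow> complex^('n + 'm)^('n + 'm)" where
  "dsum A B = (\<chi> i j. case (i, j) of
      (Inl a, Inl b) \<Rightarrow> A $ a $ b
    | (Inr a, Inr b) \<Rightarrow> B $ a $ b
    | _ \<Rightarrow> 0)"

definition minkowski_sum :: "complex set \<Rightarrow> complex set \<Rightarrow> complex set" where
  "minkowski_sum S T = {s + t | s t. s \<in> S \<and> t \<in> T}"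

end

theory Submission
  imports Defs
begin

(* Block-diagonal matrices multiply, take adjoints and traces blockwise, so for
   U = U1 \<oplus> U2 the quantity tr(C\<^sup>\<dagger> U A U\<^sup>\<dagger>) splits into the sum of the two
   block quantities; since U1 and U2 range independently, the range is the
   Minkowski sum. Minkowski sums of convex sets are convex, and those of starlike
   sets are starlike about the sum of the two centres. *)

lemma matrix_mult_dsum: "dsum A B ** dsum C D = dsum (A ** C) (B ** D)"
  unfolding dsum_def matrix_matrix_mult_def
  by (auto simp: vec_eq_iff sum.Plus[of UNIV UNIV, unfolded UNIV_Plus_UNIV] split: sum.splits)

lemma adj_dsum: "adj (dsum A B) = dsum (adj A) (adj B)"
  unfolding dsum_def adj_def by (auto simp: vec_eq_iff split: sum.splits)

lemma mtrace_dsum: "mtrace (dsum A B) = mtrace A + mtrace B"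
  unfolding dsum_def mtrace_def by (simp add: sum.Plus[of UNIV UNIV, unfolded UNIV_Plus_UNIV])

lemma minkowski_sum_eq_set_plus: "minkowski_sum S T = S + T"
  unfolding minkowski_sum_def set_plus_def by blast

lemma starlike_set_plus:
  fixes S T :: "'a::real_vector set"
  assumes "starlike S" and "starlike T"
  shows "starlike (S + T)"
proof -
  obtain a where "a \<in> S" and a: "\<And>x. x \<in> S \<Longrightarrow> closed_segment a x \<subseteq> S"
    using assms(1) unfolding starlike_def by blast
  obtain b where "b \<in> T" and b: "\<And>y. y \<in> T \<Longrightarrow> closed_segment b y \<subseteq> T"
    using assms(2) unfolding starlike_def by blast
  have "closed_segment (a + b) (x + y) \<subseteq> S + T" if "x \<in> S" "y \<in> T" for x y
  proof
    fix w assume "w \<in> closed_segment (a + b) (x + y)"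
    then obtain u where u: "0 \<le> u" "u \<le> 1" and w: "w = (1 - u) *\<^sub>R (a + b) + u *\<^sub>R (x + y)"
      unfolding closed_segment_def by blast
    have "(1 - u) *\<^sub>R a + u *\<^sub>R x \<in> S" and "(1 - u) *\<^sub>R b + u *\<^sub>R y \<in> T"
      using a[OF \<open>x \<in> S\<close>] b[OF \<open>y \<in> T\<close>] u unfolding closed_segment_def by blast+
    moreover have "w = ((1 - u) *\<^sub>R a + u *\<^sub>R x) + ((1 - u) *\<^sub>R b + u *\<^sub>R y)"
      unfolding w by (simp add: algebra_simps)
    ultimately show "w \<in> S + T" by (simp add: set_plus_intro)
  qed
  then show ?thesis
    unfolding starlike_def using \<open>a \<in> S\<close> \<open>b \<in> T\<close> by (auto elim!: set_plus_elim)
qed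

lemma rel_numrange_dsum:
  "rel_numrange {dsum U1 U2 | U1 U2. U1 \<in> K1 \<and> U2 \<in> K2} (dsum C1 C2) (dsum A1 A2)
     = rel_numrange K1 C1 A1 + rel_numrange K2 C2 A2"
proof -
  have trace_split: "mtrace (adj (dsum C1 C2) ** (dsum U1 U2 ** dsum A1 A2 ** adj (dsum U1 U2)))
      = mtrace (adj C1 ** (U1 ** A1 ** adj U1)) + mtrace (adj C2 ** (U2 ** A2 ** adj U2))"
    for U1 U2 by (simp add: adj_dsum matrix_mult_dsum mtrace_dsum)
  show ?thesis
    unfolding rel_numrange_def set_plus_def by (auto simp: trace_split) (metis trace_split)+
qed

theorem proposition2p8:
  fixes K1 :: "(complex^'n1^'n1) set" and K2 :: "(complex^'n2^'n2) set"
    and A1 C1 :: "complex^'n1^'n1" and A2 C2 :: "complex^'n2^'n2"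
  assumes "compact_connected_subgroup K1" and "compact_connected_subgroup K2"
  defines "K \<equiv> {dsum U1 U2 | U1 U2. U1 \<in> K1 \<and> U2 \<in> K2}"
  shows "rel_numrange K (dsum C1 C2) (dsum A1 A2)
           = minkowski_sum (rel_numrange K1 C1 A1) (rel_numrange K2 C2 A2)
         \<and> (starlike (rel_numrange K1 C1 A1) \<and> starlike (rel_numrange K2 C2 A2)
           \<longrightarrow> starlike (rel_numrange K (dsum C1 C2) (dsum A1 A2)))
         \<and> (convex (rel_numrange K1 C1 A1) \<and> convex (rel_numrange K2 C2 A2)
           \<longrightarrow> convex (rel_numrange K (dsum C1 C2) (dsum A1 A2)))"
  unfolding K_def rel_numrange_dsum minkowski_sum_eq_set_plus
  by (simp add: starlike_set_plus convex_set_plus)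

end
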